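(* Let $A$ be a $d$-dimensional polystochastic matrix of order $n\ge 2$. Suppose there are subsets $S_1,\dots,S_d\subseteq\{0,\dots,n-1\}$ with $|S_i|=n-1$ such that $a_\alpha\in\{0,1\}$ for all $\alpha\in S_1\times\dots\times S_d$. Then $A$ is a multidimensional permutation, i.e. all entries of $A$ are in $\{0,1\}$.
   Context: $A=(a_\alpha)_{\alpha\in\{0,\dots,n-1\}^d}$ is polystochastic if nonnegative and every line (set of indices obtained by fixing all coordinates but one) sums to $1$. A multidimensional permutation is a polystochastic $(0,1)$-matrix. *)

theory Defs
  imports "HOL-Library.FuncSet" Complex_Main
begin

definition indices :: "nat \<Rightarrow> nat \<Rightarrow> (nat \<Rightarrow> nat) set" where
  "indices d n = PiE {..<d} (\<lambda>_. {..<n})"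

definition polystochastic :: "nat \<Rightarrow> nat \<Rightarrow> ((nat \<Rightarrow> nat) \<Rightarrow> real) \<Rightarrow> bool" where
  "polystochastic d n A \<longleftrightarrow>
     (\<forall>\<alpha>\<in>indices d n. A \<alpha> \<ge> 0) \<and>
     (\<forall>i<d. \<forall>\<alpha>\<in>indices d n. (\<Sum>j<n. A (\<alpha>(i := j))) = 1)"

definition multidim_permutation :: "nat \<Rightarrow> nat \<Rightarrow> ((nat \<Rightarrow> nat) \<Rightarrow> real) \<Rightarrow> bool" where
  "multidim_permutation d n A \<longleftrightarrow>
     polystochastic d n A \<and> (\<forall>\<alpha>\<in>indices d n. A \<alpha> \<in> {0, 1})"

end

theory Submission
  imports Defs
begin

text \<open>Induction on the number of coordinates of \<open>\<alpha>\<close> lying outside the sets \<open>S i\<close>.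
  If \<open>\<alpha> i \<notin> S i\<close>, then \<open>S i\<close> is all of \<open>{..<n}\<close> except \<open>\<alpha> i\<close>, so every other entry of the
  line through \<open>\<alpha>\<close> in direction \<open>i\<close> has one bad coordinate fewer and is 0 or 1 by induction.
  Since the line sums to 1, its remaining entries sum to 0 or to at least 1, which forces
  the nonnegative entry at \<open>\<alpha>\<close> to be 1 or 0.\<close>

lemma zero_one_if_add_sum_zero_one_eq_1:
  fixes x :: real and f :: "'b \<Rightarrow> real"
  assumes "finite B" "x \<ge> 0" "x + sum f B = 1" "\<forall>b\<in>B. f b \<in> {0, 1}"
  shows "x \<in> {0, 1}"
proof (cases "\<exists>b\<in>B. f b = 1")
  case True
  then obtain b where "b \<in> B" "f b = 1" by blast
  moreover have "\<forall>b\<in>B. f b \<ge> 0" using assms(4) by auto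
  ultimately have "1 \<le> sum f B" using assms(1) by (metis member_le_sum DiffD1)
  then show ?thesis using assms(2,3) by auto
next
  case False
  then have "sum f B = 0" using assms(4) by auto
  then show ?thesis using assms(3) by auto
qed

lemma eq_lessThan_remove_if_card_eq:
  fixes S :: "nat set"
  assumes "S \<subseteq> {..<n}" "card S = n - 1" "a < n" "a \<notin> S"
  shows "S = {..<n} - {a}"
  using assms by (intro card_subset_eq) auto

lemma polystochastic_entry_zero_one_if_line_zero_one:
  assumes "polystochastic d n A" "\<alpha> \<in> indices d n" "i < d"
    and "\<And>j. j < n \<Longrightarrow> j \<noteq> \<alpha> i \<Longrightarrow> A (\<alpha>(i := j)) \<in> {0, 1}"
  shows "A \<alpha> \<in> {0, 1}"
proof -
  have "\<alpha> i < n" using assms(2,3) unfolding indices_def by auto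
  then have "(\<Sum>j<n. A (\<alpha>(i := j))) = A \<alpha> + (\<Sum>j\<in>{..<n} - {\<alpha> i}. A (\<alpha>(i := j)))"
    by (simp add: sum.remove)
  moreover have "(\<Sum>j<n. A (\<alpha>(i := j))) = 1" "A \<alpha> \<ge> 0"
    using assms(1-3) unfolding polystochastic_def by auto
  ultimately show ?thesis
    using assms(4) by (intro zero_one_if_add_sum_zero_one_eq_1[of "{..<n} - {\<alpha> i}"]) auto
qed

lemma polystochastic_entries_zero_one:
  assumes "polystochastic d n A"
    and S: "\<And>i. i < d \<Longrightarrow> S i \<subseteq> {..<n} \<and> card (S i) = n - 1"
    and core: "\<And>\<alpha>. \<alpha> \<in> PiE {..<d} S \<Longrightarrow> A \<alpha> \<in> {0, 1}"
    and "\<alpha> \<in> indices d n"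
  shows "A \<alpha> \<in> {0, 1}"
proof -
  define bad where "bad \<alpha> = {i \<in> {..<d}. \<alpha> i \<notin> S i}" for \<alpha> :: "nat \<Rightarrow> nat"
  have "\<alpha> \<in> indices d n \<Longrightarrow> A \<alpha> \<in> {0, 1}" for \<alpha>
  proof (induction "card (bad \<alpha>)" arbitrary: \<alpha> rule: less_induct)
    case less
    show ?case
    proof (cases "bad \<alpha> = {}")
      case True
      then have "\<alpha> \<in> PiE {..<d} S" using less.prems unfolding bad_def indices_def PiE_iff by auto
      then show ?thesis by (rule core)
    next
      case False
      then obtain i where i: "i < d" "\<alpha> i \<notin> S i" unfolding bad_def by auto
      have "\<alpha> i < n" using less.prems i(1) unfolding indices_def by auto
      then have Si: "S i = {..<n} - {\<alpha> i}"
        using S[OF i(1)] i(2) by (intro eq_lessThan_remove_if_card_eq) auto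
      show ?thesis
      proof (rule polystochastic_entry_zero_one_if_line_zero_one[OF assms(1) less.prems i(1)])
        fix j assume j: "j < n" "j \<noteq> \<alpha> i"
        have "bad (\<alpha>(i := j)) = bad \<alpha> - {i}" using Si j unfolding bad_def by auto
        then have "card (bad (\<alpha>(i := j))) < card (bad \<alpha>)"
          using i unfolding bad_def by (intro psubset_card_mono) auto
        moreover have "\<alpha>(i := j) \<in> indices d n"
          using less.prems i(1) j(1) unfolding indices_def PiE_iff extensional_def by auto
        ultimately show "A (\<alpha>(i := j)) \<in> {0, 1}" by (rule less.hyps)
      qed
    qed
  qed
  then show ?thesis using assms(4) .
qed

theorem mainTheorem8:
  fixes d n :: nat and A :: "(nat \<Rightarrow> nat) \<Rightarrow> real" and S :: "nat \<Rightarrow> nat set"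
  assumes "n \<ge> 2"
    and "polystochastic d n A"
    and "\<And>i. i < d \<Longrightarrow> S i \<subseteq> {..<n} \<and> card (S i) = n - 1"
    and "\<And>\<alpha>. \<alpha> \<in> PiE {..<d} S \<Longrightarrow> A \<alpha> \<in> {0, 1}"
  shows "multidim_permutation d n A"
  unfolding multidim_permutation_def
  using assms(2) polystochastic_entries_zero_one[OF assms(2-4)] by auto

end
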